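(* Let $(G,\mathcal{B}_1,\mathcal{B}_2)$ be a Rota-Baxter system of groups with descendent operation $\circ$. For every $t\in G$, $G_t=G\circ e_t:=\{a\circ e_t\mid a\in G\}$, and $(G_t,\circ)$ is a group with identity element $e_t$.
   Context: A Rota-Baxter system of groups is a triple $(G,\mathcal{B}_1,\mathcal{B}_2)$ where $G$ is a group and $\mathcal{B}_1,\mathcal{B}_2:G\to G$ are maps such that for all $a,b\in G$: $\mathcal{B}_1(a)\mathcal{B}_1(b)=\mathcal{B}_1(\mathcal{B}_1(a)b\mathcal{B}_2(a))$ and $\mathcal{B}_2(b)\mathcal{B}_2(a)=\mathcal{B}_2(\mathcal{B}_1(a)b\mathcal{B}_2(a))$. Descendent operation: $a\circ b=\mathcal{B}_1(a)b\mathcal{B}_2(a)$. For $t\in G$: $e_t=\mathcal{B}_1(t)^{-1}t\mathcal{B}_2(t)^{-1}$ and $G_t=\{a\in G\mid a\circ e_t=a\}$. *)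

theory Defs
  imports "HOL-Algebra.Group"
begin

definition RB_system :: "('a, 'b) monoid_scheme \<Rightarrow> ('a \<Rightarrow> 'a) \<Rightarrow> ('a \<Rightarrow> 'a) \<Rightarrow> bool" where
  "RB_system G B1 B2 \<longleftrightarrow> group G
     \<and> (\<forall>a\<in>carrier G. B1 a \<in> carrier G \<and> B2 a \<in> carrier G)
     \<and> (\<forall>a\<in>carrier G. \<forall>b\<in>carrier G.
          B1 a \<otimes>\<^bsub>G\<^esub> B1 b = B1 (B1 a \<otimes>\<^bsub>G\<^esub> b \<otimes>\<^bsub>G\<^esub> B2 a)
        \<and> B2 b \<otimes>\<^bsub>G\<^esub> B2 a = B2 (B1 a \<otimes>\<^bsub>G\<^esub> b \<otimes>\<^bsub>G\<^esub> B2 a))"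

definition desc_op :: "('a, 'b) monoid_scheme \<Rightarrow> ('a \<Rightarrow> 'a) \<Rightarrow> ('a \<Rightarrow> 'a) \<Rightarrow> 'a \<Rightarrow> 'a \<Rightarrow> 'a" where
  "desc_op G B1 B2 a b = B1 a \<otimes>\<^bsub>G\<^esub> b \<otimes>\<^bsub>G\<^esub> B2 a"

definition e_elt :: "('a, 'b) monoid_scheme \<Rightarrow> ('a \<Rightarrow> 'a) \<Rightarrow> ('a \<Rightarrow> 'a) \<Rightarrow> 'a \<Rightarrow> 'a" where
  "e_elt G B1 B2 t = inv\<^bsub>G\<^esub> (B1 t) \<otimes>\<^bsub>G\<^esub> t \<otimes>\<^bsub>G\<^esub> inv\<^bsub>G\<^esub> (B2 t)"

definition G_sub :: "('a, 'b) monoid_scheme \<Rightarrow> ('a \<Rightarrow> 'a) \<Rightarrow> ('a \<Rightarrow> 'a) \<Rightarrow> 'a \<Rightarrow> 'a set" where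
  "G_sub G B1 B2 t = {a \<in> carrier G. desc_op G B1 B2 a (e_elt G B1 B2 t) = a}"

end

theory Submission
  imports Defs
begin

text \<open>
  By the Rota-Baxter identities, B1 turns the descendent operation into the group product and B2
  into the opposite product; hence the descendent operation is associative. From t \<star> e_t = t one
  gets B1 e_t = B2 e_t = 1, so e_t is a left identity for \<star>, and every equation a \<star> x = y is
  solvable. In any semigroup with a left identity e and right inverses, the elements fixed by
  right multiplication with e form a group with identity e, and they are exactly the products a \<star> e.
\<close>

lemma right_mult_fixed_points_eq_image:
  assumes closed: "\<And>x y. x \<in> A \<Longrightarrow> y \<in> A \<Longrightarrow> f x y \<in> A"
    and assoc: "\<And>x y z. x \<in> A \<Longrightarrow> y \<in> A \<Longrightarrow> z \<in> A \<Longrightarrow> f (f x y) z = f x (f y z)"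
    and e: "e \<in> A" and idem: "f e e = e"
  shows "{x \<in> A. f x e = x} = (\<lambda>x. f x e) ` A"
proof
  show "{x \<in> A. f x e = x} \<subseteq> (\<lambda>x. f x e) ` A"
    by (auto intro: rev_image_eqI)
  show "(\<lambda>x. f x e) ` A \<subseteq> {x \<in> A. f x e = x}"
    using closed assoc e idem by auto
qed

lemma group_right_mult_fixed_points:
  assumes closed: "\<And>x y. x \<in> A \<Longrightarrow> y \<in> A \<Longrightarrow> f x y \<in> A"
    and assoc: "\<And>x y z. x \<in> A \<Longrightarrow> y \<in> A \<Longrightarrow> z \<in> A \<Longrightarrow> f (f x y) z = f x (f y z)"
    and e: "e \<in> A"
    and left_unit: "\<And>x. x \<in> A \<Longrightarrow> f e x = x"
    and right_inv: "\<And>x. x \<in> A \<Longrightarrow> \<exists>y \<in> A. f x y = e"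
  shows "group \<lparr>carrier = {x \<in> A. f x e = x}, mult = f, one = e\<rparr>"
    (is "group ?H")
proof -
  let ?F = "{x \<in> A. f x e = x}"
  have monoid: "monoid ?H"
    by (rule monoidI) (auto simp: closed assoc e left_unit)
  have fixed_right_inv: "\<exists>r \<in> ?F. f x r = e" if x: "x \<in> ?F" for x
  proof -
    obtain y where y: "y \<in> A" "f x y = e"
      using right_inv x by auto
    then have "f x (f y e) = e"
      using x e by (simp flip: assoc add: left_unit)
    with y e show ?thesis
      by (intro bexI[of _ "f y e"]) (auto simp: closed assoc left_unit)
  qed
  show ?thesis
  proof (rule monoid.group_l_invI[OF monoid])
    fix x assume "x \<in> carrier ?H"
    then have x: "x \<in> ?F" by simp
    then obtain r where r: "r \<in> ?F" "f x r = e"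
      using fixed_right_inv by blast
    then obtain s where s: "s \<in> ?F" "f r s = e"
      using fixed_right_inv by blast
    have "x = f x (f r s)"
      using x s by simp
    also have "\<dots> = f e s"
      using assoc[of x r s] x r s by auto
    also have "\<dots> = s"
      using s left_unit by simp
    finally have "x = s" .
    then show "\<exists>y \<in> carrier ?H. y \<otimes>\<^bsub>?H\<^esub> x = \<one>\<^bsub>?H\<^esub>"
      using r s by auto
  qed
qed

locale rota_baxter_system = group G for G (structure) +
  fixes B1 B2 :: "'a \<Rightarrow> 'a"
  assumes B1_closed: "a \<in> carrier G \<Longrightarrow> B1 a \<in> carrier G"
    and B2_closed: "a \<in> carrier G \<Longrightarrow> B2 a \<in> carrier G"
    and B1_mult: "a \<in> carrier G \<Longrightarrow> b \<in> carrier G \<Longrightarrow> B1 a \<otimes> B1 b = B1 (B1 a \<otimes> b \<otimes> B2 a)"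
    and B2_mult: "a \<in> carrier G \<Longrightarrow> b \<in> carrier G \<Longrightarrow> B2 b \<otimes> B2 a = B2 (B1 a \<otimes> b \<otimes> B2 a)"

lemma rota_baxter_system_iff: "RB_system G B1 B2 \<longleftrightarrow> rota_baxter_system G B1 B2"
  unfolding RB_system_def rota_baxter_system_def rota_baxter_system_axioms_def by blast

context rota_baxter_system
begin

abbreviation desc (infixl \<open>\<star>\<close> 70) where "a \<star> b \<equiv> desc_op G B1 B2 a b"

lemma desc_closed: "a \<in> carrier G \<Longrightarrow> b \<in> carrier G \<Longrightarrow> a \<star> b \<in> carrier G"
  by (simp add: desc_op_def B1_closed B2_closed)

lemma B1_desc: "a \<in> carrier G \<Longrightarrow> b \<in> carrier G \<Longrightarrow> B1 (a \<star> b) = B1 a \<otimes> B1 b"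
  by (simp add: desc_op_def B1_mult)

lemma B2_desc: "a \<in> carrier G \<Longrightarrow> b \<in> carrier G \<Longrightarrow> B2 (a \<star> b) = B2 b \<otimes> B2 a"
  by (simp add: desc_op_def B2_mult)

lemma desc_assoc:
  assumes "a \<in> carrier G" "b \<in> carrier G" "c \<in> carrier G"
  shows "(a \<star> b) \<star> c = a \<star> (b \<star> c)"
proof -
  have "(a \<star> b) \<star> c = B1 (a \<star> b) \<otimes> c \<otimes> B2 (a \<star> b)"
    by (simp add: desc_op_def)
  also have "\<dots> = (B1 a \<otimes> B1 b) \<otimes> c \<otimes> (B2 b \<otimes> B2 a)"
    using assms by (simp add: B1_desc B2_desc)
  also have "\<dots> = a \<star> (b \<star> c)"
    using assms by (simp add: desc_op_def B1_closed B2_closed m_assoc)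
  finally show ?thesis .
qed

lemma desc_solvable:
  "a \<in> carrier G \<Longrightarrow> y \<in> carrier G \<Longrightarrow> a \<star> (inv (B1 a) \<otimes> y \<otimes> inv (B2 a)) = y"
  by (simp add: desc_op_def B1_closed B2_closed m_assoc flip: m_assoc[of "B1 a"])

lemma e_elt_closed: "t \<in> carrier G \<Longrightarrow> e_elt G B1 B2 t \<in> carrier G"
  by (simp add: e_elt_def B1_closed B2_closed)

lemma desc_e_elt: "t \<in> carrier G \<Longrightarrow> t \<star> e_elt G B1 B2 t = t"
  by (simp add: e_elt_def desc_solvable)

lemma B1_e_elt:
  assumes "t \<in> carrier G" shows "B1 (e_elt G B1 B2 t) = \<one>"
proof -
  have "B1 t \<otimes> B1 (e_elt G B1 B2 t) = B1 (t \<star> e_elt G B1 B2 t)"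
    using assms by (simp add: e_elt_closed B1_desc)
  also have "\<dots> = B1 t"
    using assms by (simp add: desc_e_elt)
  finally show ?thesis
    using assms by (simp add: e_elt_closed B1_closed)
qed

lemma B2_e_elt:
  assumes "t \<in> carrier G" shows "B2 (e_elt G B1 B2 t) = \<one>"
proof -
  have "B2 (e_elt G B1 B2 t) \<otimes> B2 t = B2 (t \<star> e_elt G B1 B2 t)"
    using assms by (simp add: e_elt_closed B2_desc)
  also have "\<dots> = B2 t"
    using assms by (simp add: desc_e_elt)
  finally show ?thesis
    using assms by (simp add: e_elt_closed B2_closed)
qed

lemma e_elt_desc: "t \<in> carrier G \<Longrightarrow> x \<in> carrier G \<Longrightarrow> e_elt G B1 B2 t \<star> x = x"
  by (simp add: desc_op_def B1_e_elt B2_e_elt)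

end

theorem lemma4p1:
  fixes G :: "('a, 'b) monoid_scheme" and B1 B2 :: "'a \<Rightarrow> 'a" and t :: 'a
  assumes "RB_system G B1 B2" and "t \<in> carrier G"
  shows "G_sub G B1 B2 t = (\<lambda>a. desc_op G B1 B2 a (e_elt G B1 B2 t)) ` carrier G
    \<and> group \<lparr>carrier = G_sub G B1 B2 t, mult = desc_op G B1 B2, one = e_elt G B1 B2 t\<rparr>"
proof -
  interpret rota_baxter_system G B1 B2
    using assms(1) by (simp add: rota_baxter_system_iff)
  let ?e = "e_elt G B1 B2 t"
  have e: "?e \<in> carrier G" and left_unit: "\<And>x. x \<in> carrier G \<Longrightarrow> ?e \<star> x = x"
    using assms(2) by (simp_all add: e_elt_closed e_elt_desc)
  have right_inv: "\<exists>y \<in> carrier G. x \<star> y = ?e" if "x \<in> carrier G" for x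
    using that e desc_solvable[OF that e] B1_closed B2_closed by blast
  have G_sub: "G_sub G B1 B2 t = {x \<in> carrier G. x \<star> ?e = x}"
    by (simp add: G_sub_def)
  show ?thesis
    unfolding G_sub
    using right_mult_fixed_points_eq_image[of "carrier G" "(\<star>)", OF desc_closed desc_assoc e]
      group_right_mult_fixed_points[of "carrier G" "(\<star>)", OF desc_closed desc_assoc e left_unit right_inv]
      left_unit[OF e]
    by simp
qed

end
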